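(* Let $(A,\cdot)$ be a nearly associative algebra over a field $\mathbb{K}$ of characteristic $0$, let $V$ be a linear space and let $l,r:A\to\mathrm{End}(V)$ be linear maps such that $(l,r,V)$ is a bimodule of $(A,\cdot)$. Then the bracket on $A\oplus V$ given by $[x+u,y+v]=(x\cdot y-y\cdot x)+(l(x)-r(x))v-(l(y)-r(y))u$ for $x,y\in A$, $u,v\in V$, is a Lie algebra product on $A\oplus V$.
   Context: An algebra $(A,\cdot)$ is nearly associative if $x\cdot(y\cdot z)=(z\cdot x)\cdot y$ for all $x,y,z\in A$. A triple $(l,r,V)$, with $V$ a linear space and $l,r:A\to\mathrm{End}(V)$ linear, is a bimodule of $(A,\cdot)$ if for all $x,y\in A$: $l(x)l(y)=r(y)r(x)$, $l(x)r(y)=l(y\cdot x)$, and $r(x)l(y)=r(x\cdot y)$. *)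

theory Defs
  imports Complex_Main "HOL-Library.Product_Plus"
begin

definition algebra_over :: "('k::field \<Rightarrow> 'a::ab_group_add \<Rightarrow> 'a) \<Rightarrow> ('a \<Rightarrow> 'a \<Rightarrow> 'a) \<Rightarrow> bool" where
  "algebra_over sA m \<longleftrightarrow> vector_space sA
     \<and> (\<forall>x. Vector_Spaces.linear sA sA (m x))
     \<and> (\<forall>y. Vector_Spaces.linear sA sA (\<lambda>x. m x y))"

definition nearly_associative :: "('a \<Rightarrow> 'a \<Rightarrow> 'a) \<Rightarrow> bool" where
  "nearly_associative m \<longleftrightarrow> (\<forall>x y z. m x (m y z) = m (m z x) y)"

definition linear_to_End :: "('k::field \<Rightarrow> 'a::ab_group_add \<Rightarrow> 'a) \<Rightarrow> ('k \<Rightarrow> 'v::ab_group_add \<Rightarrow> 'v)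
    \<Rightarrow> ('a \<Rightarrow> 'v \<Rightarrow> 'v) \<Rightarrow> bool" where
  "linear_to_End sA sV l \<longleftrightarrow> (\<forall>x. Vector_Spaces.linear sV sV (l x))
     \<and> (\<forall>x y. l (x + y) = (\<lambda>v. l x v + l y v))
     \<and> (\<forall>c x. l (sA c x) = (\<lambda>v. sV c (l x v)))"

definition is_bimodule :: "('a \<Rightarrow> 'a \<Rightarrow> 'a) \<Rightarrow> ('a \<Rightarrow> 'v \<Rightarrow> 'v) \<Rightarrow> ('a \<Rightarrow> 'v \<Rightarrow> 'v) \<Rightarrow> bool" where
  "is_bimodule m l r \<longleftrightarrow>
     (\<forall>x y. l x \<circ> l y = r y \<circ> r x)
   \<and> (\<forall>x y. l x \<circ> r y = l (m y x))
   \<and> (\<forall>x y. r x \<circ> l y = r (m x y))"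

definition dsum_scale :: "('k \<Rightarrow> 'a \<Rightarrow> 'a) \<Rightarrow> ('k \<Rightarrow> 'v \<Rightarrow> 'v) \<Rightarrow> 'k \<Rightarrow> 'a \<times> 'v \<Rightarrow> 'a \<times> 'v" where
  "dsum_scale sA sV c p = (sA c (fst p), sV c (snd p))"

definition dsum_bracket :: "('a::ab_group_add \<Rightarrow> 'a \<Rightarrow> 'a) \<Rightarrow> ('a \<Rightarrow> 'v::ab_group_add \<Rightarrow> 'v) \<Rightarrow> ('a \<Rightarrow> 'v \<Rightarrow> 'v)
    \<Rightarrow> 'a \<times> 'v \<Rightarrow> 'a \<times> 'v \<Rightarrow> 'a \<times> 'v" where
  "dsum_bracket m l r p q =
     (m (fst p) (fst q) - m (fst q) (fst p),
      (l (fst p) (snd q) - r (fst p) (snd q)) - (l (fst q) (snd p) - r (fst q) (snd p)))"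

definition lie_algebra :: "('k::field \<Rightarrow> 'g::ab_group_add \<Rightarrow> 'g) \<Rightarrow> ('g \<Rightarrow> 'g \<Rightarrow> 'g) \<Rightarrow> bool" where
  "lie_algebra s b \<longleftrightarrow> vector_space s
     \<and> (\<forall>x. Vector_Spaces.linear s s (b x))
     \<and> (\<forall>y. Vector_Spaces.linear s s (\<lambda>x. b x y))
     \<and> (\<forall>x. b x x = 0)
     \<and> (\<forall>x y z. b x (b y z) + b y (b z x) + b z (b x y) = 0)"

end

theory Submission
  imports Defs
begin

text \<open>Near associativity x(yz) = (zx)y maps the cyclic sum of the x(yz)-type products onto that of
  the (xy)z-type products, so the commutator of a nearly associative algebra satisfies Jacobi.
  For a bimodule, \<rho> = l - r is a representation of this Lie algebra: in \<rho>(x)\<rho>(y) - \<rho>(y)\<rho>(x) the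
  terms l(x)l(y) and r(y)r(x) cancel by the first bimodule axiom, and the mixed terms give
  \<rho>(xy - yx) by the other two. The bracket on A \<oplus> V is the semidirect product of the commutator
  algebra with \<rho>, which is a Lie algebra for every representation.\<close>

definition commutator :: "('a::ab_group_add \<Rightarrow> 'a \<Rightarrow> 'a) \<Rightarrow> 'a \<Rightarrow> 'a \<Rightarrow> 'a" where
  "commutator m x y = m x y - m y x"

definition lie_representation :: "('a \<Rightarrow> 'a \<Rightarrow> 'a) \<Rightarrow> ('a \<Rightarrow> 'v::ab_group_add \<Rightarrow> 'v) \<Rightarrow> bool" where
  "lie_representation b \<rho> \<longleftrightarrow> (\<forall>x y v. \<rho> (b x y) v = \<rho> x (\<rho> y v) - \<rho> y (\<rho> x v))"

definition semidirect_bracket :: "('a \<Rightarrow> 'a \<Rightarrow> 'a) \<Rightarrow> ('a \<Rightarrow> 'v::ab_group_add \<Rightarrow> 'v)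
    \<Rightarrow> 'a \<times> 'v \<Rightarrow> 'a \<times> 'v \<Rightarrow> 'a \<times> 'v" where
  "semidirect_bracket b \<rho> p q = (b (fst p) (fst q), \<rho> (fst p) (snd q) - \<rho> (fst q) (snd p))"

lemma lie_algebra_iff_algebra_over:
  "lie_algebra s b \<longleftrightarrow> algebra_over s b \<and> (\<forall>x. b x x = 0)
     \<and> (\<forall>x y z. b x (b y z) + b y (b z x) + b z (b x y) = 0)"
  unfolding lie_algebra_def algebra_over_def by blast

lemma scale_right_diff_vector_space:
  "vector_space s \<Longrightarrow> s c (u - v) = s c u - s c v"
  by (simp add: module.scale_right_diff_distrib module_iff_vector_space)

lemma algebra_overD:
  assumes "algebra_over s m"
  shows "vector_space s"
    and "m x (y + z) = m x y + m x z" and "m (x + y) z = m x z + m y z"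
    and "m x (y - z) = m x y - m x z" and "m (x - y) z = m x z - m y z"
    and "m x (s c y) = s c (m x y)" and "m (s c x) y = s c (m x y)"
proof -
  have lin: "Vector_Spaces.linear s s (m x)" "Vector_Spaces.linear s s (\<lambda>x. m x z)" for x z
    using assms unfolding algebra_over_def by blast+
  then show "vector_space s" unfolding Vector_Spaces.linear_iff by blast
  show "m x (y + z) = m x y + m x z" "m (x + y) z = m x z + m y z"
    "m x (s c y) = s c (m x y)" "m (s c x) y = s c (m x y)"
    using lin unfolding Vector_Spaces.linear_iff by simp_all
  show "m x (y - z) = m x y - m x z"
    using lin(1)[unfolded linear_iff_module_hom] by (rule module_hom.diff)
  show "m (x - y) z = m x z - m y z"
    using module_hom.diff[OF lin(2)[unfolded linear_iff_module_hom]] by simp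
qed

lemma linear_to_EndD:
  assumes "linear_to_End sA sV l"
  shows "l x (u + v) = l x u + l x v" and "l (x + y) v = l x v + l y v"
    and "l x (u - v) = l x u - l x v" and "l (x - y) v = l x v - l y v"
    and "l x (sV c u) = sV c (l x u)" and "l (sA c x) v = sV c (l x v)"
proof -
  have lin: "Vector_Spaces.linear sV sV (l x)" for x
    using assms unfolding linear_to_End_def by blast
  have add: "l (x + y) v = l x v + l y v" for x y
    using assms unfolding linear_to_End_def by metis
  show "l x (u + v) = l x u + l x v" "l x (sV c u) = sV c (l x u)"
    using lin unfolding Vector_Spaces.linear_iff by simp_all
  show "l x (u - v) = l x u - l x v"
    using lin[unfolded linear_iff_module_hom] by (rule module_hom.diff)
  show "l (x + y) v = l x v + l y v" by (fact add)
  show "l (x - y) v = l x v - l y v"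
    by (rule additive.diff) (unfold_locales, fact add)
  show "l (sA c x) v = sV c (l x v)"
    using assms unfolding linear_to_End_def by metis
qed

lemma vector_space_dsum_scale:
  assumes "vector_space sA" and "vector_space sV"
  shows "vector_space (dsum_scale sA sV)"
  using assms unfolding vector_space_def dsum_scale_def by (simp add: plus_prod_def)

lemma linear_to_End_diff:
  assumes "vector_space sV" and "linear_to_End sA sV l" and "linear_to_End sA sV r"
  shows "linear_to_End sA sV (\<lambda>x v. l x v - r x v)"
  using assms scale_right_diff_vector_space[OF assms(1)]
  unfolding linear_to_End_def Vector_Spaces.linear_iff
  by (auto simp: fun_eq_iff linear_to_EndD[OF assms(2)] linear_to_EndD[OF assms(3)])

lemma algebra_over_commutator:
  assumes "algebra_over s m"
  shows "algebra_over s (commutator m)"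
proof -
  have "vector_space s" by (rule algebra_overD(1)[OF assms])
  with scale_right_diff_vector_space[OF this] show ?thesis
    unfolding algebra_over_def Vector_Spaces.linear_iff commutator_def
    by (simp add: algebra_overD[OF assms] algebra_simps)
qed

lemma jacobi_commutator_nearly_associative:
  assumes "algebra_over s m" and "nearly_associative m"
  shows "commutator m x (commutator m y z) + commutator m y (commutator m z x)
    + commutator m z (commutator m x y) = 0"
proof -
  have "m x (m y z) = m (m z x) y" for x y z
    using assms(2) unfolding nearly_associative_def by blast
  then show ?thesis
    unfolding commutator_def by (simp add: algebra_overD[OF assms(1)] algebra_simps)
qed

lemma lie_algebra_commutator_nearly_associative:
  assumes "algebra_over s m" and "nearly_associative m"
  shows "lie_algebra s (commutator m)"
  using algebra_over_commutator[OF assms(1)] jacobi_commutator_nearly_associative[OF assms]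
  unfolding lie_algebra_iff_algebra_over by (simp add: commutator_def)

lemma lie_representation_bimodule:
  assumes "linear_to_End sA sV l" and "linear_to_End sA sV r" and "is_bimodule m l r"
  shows "lie_representation (commutator m) (\<lambda>x v. l x v - r x v)"
proof -
  have "l x (l y v) = r y (r x v)" "l x (r y v) = l (m y x) v" "r x (l y v) = r (m x y) v"
    for x y v
    using assms(3) unfolding is_bimodule_def by (metis comp_apply)+
  then show ?thesis
    unfolding lie_representation_def commutator_def
    by (simp add: linear_to_EndD[OF assms(1)] linear_to_EndD[OF assms(2)] algebra_simps)
qed

lemma algebra_over_semidirect_bracket:
  assumes "algebra_over sA b" and "vector_space sV" and "linear_to_End sA sV \<rho>"
  shows "algebra_over (dsum_scale sA sV) (semidirect_bracket b \<rho>)"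
proof -
  have "vector_space (dsum_scale sA sV)"
    using vector_space_dsum_scale[OF algebra_overD(1)[OF assms(1)] assms(2)] .
  with scale_right_diff_vector_space[OF assms(2)] show ?thesis
    unfolding algebra_over_def Vector_Spaces.linear_iff semidirect_bracket_def dsum_scale_def
    by (simp add: plus_prod_def algebra_overD[OF assms(1)] linear_to_EndD[OF assms(3)])
qed

lemma jacobi_semidirect_bracket:
  assumes "lie_algebra sA b" and "linear_to_End sA sV \<rho>" and "lie_representation b \<rho>"
  shows "semidirect_bracket b \<rho> p (semidirect_bracket b \<rho> q w)
    + semidirect_bracket b \<rho> q (semidirect_bracket b \<rho> w p)
    + semidirect_bracket b \<rho> w (semidirect_bracket b \<rho> p q) = 0"
proof -
  have jacobi: "b x (b y z) + b y (b z x) + b z (b x y) = 0" for x y z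
    using assms(1) unfolding lie_algebra_def by blast
  have rep: "\<rho> (b x y) v = \<rho> x (\<rho> y v) - \<rho> y (\<rho> x v)" for x y v
    using assms(3) unfolding lie_representation_def by blast
  show ?thesis
    unfolding semidirect_bracket_def
    by (simp add: jacobi rep linear_to_EndD[OF assms(2)] zero_prod_def)
qed

lemma lie_algebra_semidirect_bracket:
  assumes "lie_algebra sA b" and "vector_space sV" and "linear_to_End sA sV \<rho>"
    and "lie_representation b \<rho>"
  shows "lie_algebra (dsum_scale sA sV) (semidirect_bracket b \<rho>)"
proof -
  have "algebra_over sA b" and "b x x = 0" for x
    using assms(1) unfolding lie_algebra_iff_algebra_over by blast+
  then show ?thesis
    using algebra_over_semidirect_bracket[OF _ assms(2,3)] jacobi_semidirect_bracket[OF assms(1,3,4)]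
    unfolding lie_algebra_iff_algebra_over by (simp add: semidirect_bracket_def zero_prod_def)
qed

lemma dsum_bracket_eq_semidirect_bracket:
  "dsum_bracket m l r = semidirect_bracket (commutator m) (\<lambda>x v. l x v - r x v)"
  by (simp add: fun_eq_iff dsum_bracket_def semidirect_bracket_def commutator_def)

theorem mainTheorem4:
  fixes sA :: "'k::field_char_0 \<Rightarrow> 'a::ab_group_add \<Rightarrow> 'a"
    and sV :: "'k \<Rightarrow> 'v::ab_group_add \<Rightarrow> 'v"
    and m :: "'a \<Rightarrow> 'a \<Rightarrow> 'a"
    and l r :: "'a \<Rightarrow> 'v \<Rightarrow> 'v"
  assumes "algebra_over sA m"
    and "nearly_associative m"
    and "vector_space sV"
    and "linear_to_End sA sV l"
    and "linear_to_End sA sV r"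
    and "is_bimodule m l r"
  shows "lie_algebra (dsum_scale sA sV) (dsum_bracket m l r)"
  unfolding dsum_bracket_eq_semidirect_bracket
proof (rule lie_algebra_semidirect_bracket)
  show "lie_algebra sA (commutator m)"
    using assms(1,2) by (rule lie_algebra_commutator_nearly_associative)
  show "linear_to_End sA sV (\<lambda>x v. l x v - r x v)"
    using assms(3-5) by (rule linear_to_End_diff)
  show "lie_representation (commutator m) (\<lambda>x v. l x v - r x v)"
    using assms(4-6) by (rule lie_representation_bimodule)
qed (fact assms(3))

end
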